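(* For half-spaces in $\mathbb{R}^5$ we have $\chi_{\rm big}=\infty$: for every positive integers $k$ and $m$ there is a finite point set $P\subset\mathbb{R}^5$ such that for every coloring of $P$ with $k$ colors some half-space contains at least $m$ points of $P$, all of the same color. *)

theory Defs
  imports "HOL-Analysis.Analysis"
begin

definition halfspace :: "'a::real_inner set \<Rightarrow> bool" where
  "halfspace H \<longleftrightarrow> (\<exists>a b. a \<noteq> 0 \<and> H = {x. inner a x \<le> b})"

end

theory Submission
  imports Defs
begin

text \<open>Iterating a tree construction gives hypergraphs \<open>H\<^sub>j\<close> with edges of size \<open>m\<close> and no
  proper colouring with \<open>j\<close> colours: the vertices of \<open>H\<^bsub>j+1\<^esub>\<close> are the nodes of the complete
  tree of depth \<open>m - 1\<close> whose children are labelled by the vertices of \<open>H\<^sub>j\<close>, and its edges are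
  the root-to-leaf branches together with, below every node, copies of the edges of \<open>H\<^sub>j\<close>
  among its children.

  The vertices are then realised on the line: every node \<open>x\<close> is an affine contraction \<open>T\<^sub>x\<close>
  with position \<open>p\<^sub>x = T\<^sub>x 0\<close>, scale \<open>w\<^sub>x\<close> and weight \<open>n\<^sub>x\<close>. A separation invariant shows that
  every edge consists exactly of the nodes \<open>x\<close> with \<open>n\<^sub>x \<ge> t\<close> whose interval of radius
  \<open>w\<^sub>x * sqrt (\<rho> n\<^sub>x)\<close> around \<open>p\<^sub>x\<close> contains a suitable point \<open>\<theta>\<close>, for every \<open>\<rho>\<close> in a band.
  Taking \<open>\<rho> n = A - A / 2 * 4 ^ t / 4 ^ n\<close>, this condition is linear in
  \<open>(p\<^sub>x, p\<^sub>x\<^sup>2, w\<^sub>x\<^sup>2, w\<^sub>x\<^sup>2 / 4 ^ n\<^sub>x)\<close>, so after lifting the vertices to these points of \<open>\<real>\<^sup>5\<close>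
  every edge is cut out by a half-space, and a monochromatic edge gives the half-space sought.\<close>

section \<open>Hypergraphs without proper colourings\<close>

datatype node = Node "node list"

definition node_cons :: "node \<Rightarrow> node \<Rightarrow> node" where
  "node_cons u x = (case x of Node xs \<Rightarrow> Node (u # xs))"

abbreviation leaf :: node where
  "leaf \<equiv> Node []"

lemma node_cons_inject [simp]: "node_cons u x = node_cons u' x' \<longleftrightarrow> u = u' \<and> x = x'"
  by (cases x; cases x') (auto simp: node_cons_def)

lemma node_cons_neq_leaf [simp]: "node_cons u x \<noteq> leaf" "leaf \<noteq> node_cons u x"
  by (cases x; simp add: node_cons_def)+

text \<open>The complete \<open>U\<close>-ary tree of depth \<open>d\<close>: a node is the sequence of labels on the path
  leading to it from the root \<^const>\<open>leaf\<close>.\<close>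

fun tree_nodes :: "node set \<Rightarrow> nat \<Rightarrow> node set" where
  "tree_nodes U 0 = {leaf}"
| "tree_nodes U (Suc d) = insert leaf {node_cons u x | u x. u \<in> U \<and> x \<in> tree_nodes U d}"

fun branches :: "node set \<Rightarrow> nat \<Rightarrow> node set set" where
  "branches U 0 = {{leaf}}"
| "branches U (Suc d) = {insert leaf (node_cons u ` p) | u p. u \<in> U \<and> p \<in> branches U d}"

fun sibling_copies :: "node set \<Rightarrow> node set set \<Rightarrow> nat \<Rightarrow> node set set" where
  "sibling_copies U E 0 = {}"
| "sibling_copies U E (Suc d) =
     {(\<lambda>u. node_cons u leaf) ` e | e. e \<in> E} \<union> {node_cons u ` e | u e. u \<in> U \<and> e \<in> sibling_copies U E d}"

fun hg_vertices :: "nat \<Rightarrow> nat \<Rightarrow> node set" where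
  "hg_vertices M 0 = {leaf}"
| "hg_vertices M (Suc j) = tree_nodes (hg_vertices M j) M"

fun hg_edges :: "nat \<Rightarrow> nat \<Rightarrow> node set set" where
  "hg_edges M 0 = {}"
| "hg_edges M (Suc j) = branches (hg_vertices M j) M \<union> sibling_copies (hg_vertices M j) (hg_edges M j) M"

lemma leaf_in_tree_nodes [simp]: "leaf \<in> tree_nodes U d"
  by (cases d) auto

lemma tree_nodes_SucE:
  assumes "x \<in> tree_nodes U (Suc d)" "x \<noteq> leaf"
  obtains u y where "u \<in> U" "y \<in> tree_nodes U d" "x = node_cons u y"
  using assms by auto

lemma finite_tree_nodes: "finite U \<Longrightarrow> finite (tree_nodes U d)"
proof (induction d)
  case (Suc d)
  have "{node_cons u x | u x. u \<in> U \<and> x \<in> tree_nodes U d} = case_prod node_cons ` (U \<times> tree_nodes U d)"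
    by auto
  with Suc show ?case by simp
qed simp

lemma finite_hg_vertices: "finite (hg_vertices M j)"
  by (induction j) (auto simp: finite_tree_nodes)

lemma branches_subset: "p \<in> branches U d \<Longrightarrow> p \<subseteq> tree_nodes U d"
  by (induction d arbitrary: p) auto

lemma sibling_copies_subset:
  assumes "\<And>e. e \<in> E \<Longrightarrow> e \<subseteq> U"
  shows "e \<in> sibling_copies U E d \<Longrightarrow> e \<subseteq> tree_nodes U d"
proof (induction d arbitrary: e)
  case (Suc d)
  then show ?case
    using assms by fastforce
qed simp

lemma hg_edges_subset: "e \<in> hg_edges M j \<Longrightarrow> e \<subseteq> hg_vertices M j"
proof (induction j arbitrary: e)
  case (Suc j)
  then show ?case
    using branches_subset[of e "hg_vertices M j" M]
      sibling_copies_subset[of "hg_edges M j" "hg_vertices M j" e M] by auto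
qed simp

lemma card_branches: "p \<in> branches U d \<Longrightarrow> card p = Suc d"
proof (induction d arbitrary: p)
  case (Suc d)
  then obtain u p' where p: "p = insert leaf (node_cons u ` p')" "p' \<in> branches U d"
    by auto
  have "finite p'"
    using Suc.IH[OF p(2)] card_ge_0_finite by force
  moreover have "inj_on (node_cons u) p'"
    by (auto simp: inj_on_def)
  ultimately show ?case
    using p Suc.IH[OF p(2)] by (simp add: card_image image_iff)
qed simp

lemma card_sibling_copies:
  assumes "\<And>e. e \<in> E \<Longrightarrow> card e = c"
  shows "e \<in> sibling_copies U E d \<Longrightarrow> card e = c"
proof (induction d arbitrary: e)
  case (Suc d)
  have "inj_on (\<lambda>u. node_cons u leaf) A" "inj_on (node_cons u) A" for A u
    by (auto simp: inj_on_def)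
  then have "card ((\<lambda>u. node_cons u leaf) ` A) = card A" "card (node_cons u ` A) = card A" for A u
    by (simp_all add: card_image)
  with Suc.prems Suc.IH assms show ?case
    by auto
qed simp

lemma card_hg_edges: "e \<in> hg_edges M j \<Longrightarrow> card e = Suc M"
proof (induction j arbitrary: e)
  case (Suc j)
  then show ?case
    using card_branches[of e "hg_vertices M j" M]
      card_sibling_copies[of "hg_edges M j" "Suc M" e "hg_vertices M j" M] by auto
qed simp

text \<open>Colour the root \<^const>\<open>leaf\<close>. If some child has the same colour, recurse into its
  subtree; otherwise the children, i.e.\ a copy of \<open>U\<close>, use one colour fewer.\<close>

lemma branch_or_sibling_copy_monochromatic:
  fixes col :: "node \<Rightarrow> 'c"
  assumes fewer_colours: "\<And>S' (c :: node \<Rightarrow> 'c). finite S' \<Longrightarrow> card S' \<le> j \<Longrightarrow> c ` U \<subseteq> S' \<Longrightarrow>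
      \<exists>e\<in>E. \<exists>i. \<forall>x\<in>e. c x = i"
    and S: "finite S" "card S \<le> Suc j" "col ` tree_nodes U d \<subseteq> S"
  shows "(\<exists>e\<in>sibling_copies U E d. \<exists>i. \<forall>x\<in>e. col x = i) \<or> (\<exists>p\<in>branches U d. \<forall>x\<in>p. col x = col leaf)"
  using S(3)
proof (induction d arbitrary: col)
  case (Suc d)
  show ?case
  proof (cases "\<exists>u\<in>U. col (node_cons u leaf) = col leaf")
    case True
    then obtain u where u: "u \<in> U" "col (node_cons u leaf) = col leaf"
      by blast
    have "(col \<circ> node_cons u) ` tree_nodes U d \<subseteq> S"
      using Suc.prems u(1) by auto
    from Suc.IH[OF this] show ?thesis
    proof
      assume "\<exists>e\<in>sibling_copies U E d. \<exists>i. \<forall>x\<in>e. (col \<circ> node_cons u) x = i"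
      then obtain e i where "e \<in> sibling_copies U E d" "\<forall>x\<in>e. col (node_cons u x) = i"
        by auto
      then have "node_cons u ` e \<in> sibling_copies U E (Suc d)" "\<forall>x\<in>node_cons u ` e. col x = i"
        using u(1) by auto
      then show ?thesis
        by blast
    next
      assume "\<exists>p\<in>branches U d. \<forall>x\<in>p. (col \<circ> node_cons u) x = (col \<circ> node_cons u) leaf"
      then obtain p where "p \<in> branches U d" "\<forall>x\<in>p. col (node_cons u x) = col leaf"
        using u(2) by auto
      then have "insert leaf (node_cons u ` p) \<in> branches U (Suc d)"
        "\<forall>x\<in>insert leaf (node_cons u ` p). col x = col leaf"
        using u(1) by auto
      then show ?thesis
        by blast
    qed
  next
    case False
    have "col leaf \<in> S"
      using Suc.prems by auto
    then have "card (S - {col leaf}) \<le> j"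
      using S by simp
    moreover have "(\<lambda>u. col (node_cons u leaf)) ` U \<subseteq> S - {col leaf}"
      using Suc.prems False by auto
    ultimately obtain e i where "e \<in> E" "\<forall>u\<in>e. col (node_cons u leaf) = i"
      using fewer_colours[of "S - {col leaf}" "\<lambda>u. col (node_cons u leaf)"] S(1) by auto
    then have "(\<lambda>u. node_cons u leaf) ` e \<in> sibling_copies U E (Suc d)"
      "\<forall>x\<in>(\<lambda>u. node_cons u leaf) ` e. col x = i"
      by auto
    then show ?thesis
      by blast
  qed
qed simp

theorem hg_edges_monochromatic:
  fixes col :: "node \<Rightarrow> 'c"
  assumes "finite S" "card S \<le> j" "col ` hg_vertices M j \<subseteq> S"
  shows "\<exists>e\<in>hg_edges M j. \<exists>i. \<forall>x\<in>e. col x = i"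
  using assms
proof (induction j arbitrary: S col)
  case 0
  then show ?case
    by (simp add: card_0_eq)
next
  case (Suc j)
  have coloured: "col ` tree_nodes (hg_vertices M j) M \<subseteq> S"
    using Suc.prems(3) by simp
  have "(\<exists>e\<in>sibling_copies (hg_vertices M j) (hg_edges M j) M. \<exists>i. \<forall>x\<in>e. col x = i) \<or>
      (\<exists>p\<in>branches (hg_vertices M j) M. \<forall>x\<in>p. col x = col leaf)"
    by (rule branch_or_sibling_copy_monochromatic[OF _ Suc.prems(1,2) coloured]) (rule Suc.IH; assumption)
  then show ?case
    by auto
qed

section \<open>Nodes as affine contractions\<close>

definition offset :: "nat \<Rightarrow> real" where
  "offset l = (1/4) ^ l"

text \<open>A node \<open>x\<close> of level \<open>j\<close> acts on the line by the affine contraction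
  \<open>T\<^sub>x v = node_pos s j x + node_scale s j x * v\<close>, and the recursion below says
  \<open>T\<^bsub>node_cons u x\<^esub> = S \<circ> T\<^sub>u \<circ> T\<^sub>x\<close> with \<open>S v = offset (Suc j) + s * v\<close>.\<close>

fun node_weight :: "nat \<Rightarrow> node \<Rightarrow> nat" where
  "node_weight 0 x = 0"
| "node_weight (Suc j) (Node []) = 0"
| "node_weight (Suc j) (Node (u # xs)) = Suc (node_weight j u + node_weight (Suc j) (Node xs))"

fun node_scale :: "real \<Rightarrow> nat \<Rightarrow> node \<Rightarrow> real" where
  "node_scale s 0 x = 1"
| "node_scale s (Suc j) (Node []) = 1"
| "node_scale s (Suc j) (Node (u # xs)) = s * node_scale s j u * node_scale s (Suc j) (Node xs)"

fun node_pos :: "real \<Rightarrow> nat \<Rightarrow> node \<Rightarrow> real" where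
  "node_pos s 0 x = 0"
| "node_pos s (Suc j) (Node []) = 0"
| "node_pos s (Suc j) (Node (u # xs)) =
     offset (Suc j) + s * node_pos s j u + s * node_scale s j u * node_pos s (Suc j) (Node xs)"

definition node_map :: "real \<Rightarrow> nat \<Rightarrow> node \<Rightarrow> real \<Rightarrow> real" where
  "node_map s j x v = node_pos s j x + node_scale s j x * v"

definition node_unmap :: "real \<Rightarrow> nat \<Rightarrow> node \<Rightarrow> real \<Rightarrow> real" where
  "node_unmap s j x a = (a - node_pos s j x) / node_scale s j x"

lemma node_values_leaf [simp]:
  "node_weight j leaf = 0" "node_scale s j leaf = 1" "node_pos s j leaf = 0"
  by (cases j; simp)+

lemma node_values_cons [simp]:
  "node_weight (Suc j) (node_cons u x) = Suc (node_weight j u + node_weight (Suc j) x)"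
  "node_scale s (Suc j) (node_cons u x) = s * node_scale s j u * node_scale s (Suc j) x"
  "node_pos s (Suc j) (node_cons u x) =
     offset (Suc j) + s * node_pos s j u + s * node_scale s j u * node_pos s (Suc j) x"
  by (cases x; simp add: node_cons_def)+

lemma node_map_leaf [simp]: "node_map s j leaf v = v"
  and node_unmap_leaf [simp]: "node_unmap s j leaf a = a"
  by (simp_all add: node_map_def node_unmap_def)

lemma node_map_0 [simp]: "node_map s j x 0 = node_pos s j x"
  by (simp add: node_map_def)

lemma node_unmap_map [simp]: "node_scale s j x \<noteq> 0 \<Longrightarrow> node_unmap s j x (node_map s j x v) = v"
  by (simp add: node_map_def node_unmap_def)

lemma node_map_cons:
  "node_map s (Suc j) (node_cons u x) v = offset (Suc j) + s * node_map s j u (node_map s (Suc j) x v)"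
  by (simp add: node_map_def algebra_simps)

lemma node_pos_cons_map:
  "node_pos s (Suc j) (node_cons u x) = offset (Suc j) + s * node_map s j u (node_pos s (Suc j) x)"
  using node_map_cons[of s j u x 0] by (simp add: node_map_def)

lemma node_unmap_cons:
  assumes "s \<noteq> 0" "node_scale s j u \<noteq> 0" "node_scale s (Suc j) x \<noteq> 0"
  shows "node_unmap s (Suc j) (node_cons u x) (offset (Suc j) + s * a) =
    node_unmap s (Suc j) x (node_unmap s j u a)"
  using assms by (simp add: node_unmap_def field_simps)

lemma offset_pos: "0 < offset l"
  by (simp add: offset_def)

lemma offset_Suc: "offset (Suc l) = offset l / 4"
  by (simp add: offset_def)

lemma offset_antimono: "l \<le> l' \<Longrightarrow> offset l' \<le> offset l"
  unfolding offset_def by (rule power_decreasing) auto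

lemma offset_less: "l < l' \<Longrightarrow> offset l' \<le> offset l / 4"
  using offset_antimono[of "Suc l" l'] by (simp add: offset_Suc)

lemma offset_le_quarter: "1 \<le> l \<Longrightarrow> offset l \<le> 1/4"
  using offset_antimono[of 1 l] by (simp add: offset_def)

locale small_ratio =
  fixes K :: nat and s :: real
  assumes s_pos: "0 < s" and s_small: "100 * s \<le> offset K"
begin

lemma s_le_offset: "l \<le> K \<Longrightarrow> 100 * s \<le> offset l"
  using offset_antimono[of l K] s_small by simp

lemma s_le: "s \<le> 1/100"
  using s_le_offset[of 0] by (simp add: offset_def)

lemma tree_node_bounds_from:
  assumes U: "\<And>u. u \<in> U \<Longrightarrow>
      0 \<le> node_pos s j u \<and> node_pos s j u \<le> 1/2 \<and> 0 < node_scale s j u \<and> node_scale s j u \<le> 1"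
  shows "x \<in> tree_nodes U d \<Longrightarrow> x \<noteq> leaf \<Longrightarrow>
    offset (Suc j) \<le> node_pos s (Suc j) x \<and> node_pos s (Suc j) x \<le> offset (Suc j) + s \<and>
    0 < node_scale s (Suc j) x \<and> node_scale s (Suc j) x \<le> s"
proof (induction d arbitrary: x)
  case (Suc d)
  then obtain u y where uy: "u \<in> U" "y \<in> tree_nodes U d" "x = node_cons u y"
    by (auto elim: tree_nodes_SucE)
  have "offset (Suc j) \<le> 1/4"
    by (rule offset_le_quarter) simp
  then have y: "0 \<le> node_pos s (Suc j) y \<and> node_pos s (Suc j) y \<le> 1/2 \<and>
      0 < node_scale s (Suc j) y \<and> node_scale s (Suc j) y \<le> 1"
    using Suc.IH[OF uy(2)] s_le offset_pos[of "Suc j"] by (cases "y = leaf") auto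
  have u: "0 \<le> node_pos s j u \<and> node_pos s j u \<le> 1/2 \<and> 0 < node_scale s j u \<and> node_scale s j u \<le> 1"
    using U uy(1) .
  have "node_scale s j u * node_pos s (Suc j) y \<le> 1 * (1/2)"
    using u y by (intro mult_mono) auto
  moreover have "0 \<le> node_scale s j u * node_pos s (Suc j) y"
    using u y by simp
  ultimately have "0 \<le> node_map s j u (node_pos s (Suc j) y) \<and> node_map s j u (node_pos s (Suc j) y) \<le> 1"
    using u by (simp add: node_map_def)
  then have "s * node_map s j u (node_pos s (Suc j) y) \<le> s * 1" "0 \<le> s * node_map s j u (node_pos s (Suc j) y)"
    using s_pos by (auto intro: mult_left_mono)
  moreover have "node_scale s j u * node_scale s (Suc j) y \<le> 1 * 1"
    using u y by (intro mult_mono) auto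
  ultimately show ?case
    using uy(3) u y s_pos by (simp add: node_pos_cons_map del: node_values_cons(3))
qed simp

lemma hg_vertex_bounds:
  "x \<in> hg_vertices M j \<Longrightarrow>
    0 \<le> node_pos s j x \<and> node_pos s j x \<le> 1/2 \<and> 0 < node_scale s j x \<and> node_scale s j x \<le> 1"
proof (induction j arbitrary: x)
  case (Suc j)
  have "offset (Suc j) \<le> 1/4"
    by (rule offset_le_quarter) simp
  with Suc tree_node_bounds_from[of "hg_vertices M j" j x M] show ?case
    using s_le offset_pos[of "Suc j"] by (cases "x = leaf") auto
qed simp

lemma tree_node_bounds:
  "x \<in> tree_nodes (hg_vertices M j) d \<Longrightarrow> x \<noteq> leaf \<Longrightarrow>
    offset (Suc j) \<le> node_pos s (Suc j) x \<and> node_pos s (Suc j) x \<le> offset (Suc j) + s \<and>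
    0 < node_scale s (Suc j) x \<and> node_scale s (Suc j) x \<le> s"
  by (rule tree_node_bounds_from[OF hg_vertex_bounds])

lemma tree_node_scale_pos: "x \<in> tree_nodes (hg_vertices M j) d \<Longrightarrow> 0 < node_scale s (Suc j) x"
  using tree_node_bounds[of x M j d] by (cases "x = leaf") auto

end

section \<open>The separation invariant\<close>

text \<open>The admissible values are \<open>0\<close> and, up to slack \<open>s\<close>, the positions of the non-root tree
  nodes of the levels \<open>l\<close> with \<open>j < l \<le> K\<close>.\<close>

definition admissible :: "nat \<Rightarrow> real \<Rightarrow> nat \<Rightarrow> real \<Rightarrow> bool" where
  "admissible K s j v \<longleftrightarrow> v = 0 \<or> (\<exists>l. j < l \<and> l \<le> K \<and> offset l \<le> v \<and> v \<le> offset l + 2 * s)"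

definition outside_window :: "real \<Rightarrow> nat \<Rightarrow> real \<Rightarrow> bool" where
  "outside_window s l a \<longleftrightarrow> a < offset l - s \<or> offset l + 2 * s < a"

definition separated :: "nat \<Rightarrow> real \<Rightarrow> nat \<Rightarrow> nat \<Rightarrow> nat \<Rightarrow> real \<Rightarrow> bool" where
  "separated K s j n n' a \<longleftrightarrow>
     (\<forall>l. j < l \<longrightarrow> l \<le> K \<longrightarrow> outside_window s l a) \<and> 2 * offset (Suc j) < \<bar>a\<bar> \<and> (n' < n \<or> 1 < \<bar>a\<bar>)"

text \<open>The invariant behind the construction: for distinct nodes \<open>w, w'\<close>, the map
  \<open>T\<^bsub>w'\<^esub>\<^sup>-\<^sup>1 \<circ> T\<^sub>w\<close> sends admissible values out of all windows of the deeper levels, away from \<open>0\<close>,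
  and beyond distance \<open>1\<close> unless \<open>w'\<close> is lighter than \<open>w\<close>.\<close>

definition well_separated :: "nat \<Rightarrow> real \<Rightarrow> nat \<Rightarrow> node set \<Rightarrow> bool" where
  "well_separated K s j N \<longleftrightarrow> (\<forall>w\<in>N. \<forall>w'\<in>N. w \<noteq> w' \<longrightarrow> (\<forall>v. admissible K s j v \<longrightarrow>
     separated K s j (node_weight j w) (node_weight j w') (node_unmap s j w' (node_map s j w v))))"

lemma well_separatedD:
  "well_separated K s j N \<Longrightarrow> w \<in> N \<Longrightarrow> w' \<in> N \<Longrightarrow> w \<noteq> w' \<Longrightarrow> admissible K s j v \<Longrightarrow>
    separated K s j (node_weight j w) (node_weight j w') (node_unmap s j w' (node_map s j w v))"
  unfolding well_separated_def by blast

lemma separated_weight_shift: "separated K s j (c + n) (c + n') a \<longleftrightarrow> separated K s j n n' a"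
  by (simp add: separated_def)

lemma separated_Suc:
  assumes "separated K s j n n' a" "n \<le> m"
  shows "separated K s (Suc j) (Suc m) (Suc n') a"
proof -
  have "offset (Suc (Suc j)) \<le> offset (Suc j)"
    by (rule offset_antimono) simp
  with assms show ?thesis
    by (auto simp: separated_def)
qed

context small_ratio
begin

lemma separated_if_far:
  assumes "1 < \<bar>a\<bar>"
  shows "separated K s j n n' a"
proof -
  have "outside_window s l a" if "j < l" for l
  proof -
    have "offset l \<le> 1/4"
      using that by (intro offset_le_quarter) simp
    then show ?thesis
      using assms s_le offset_pos[of l] unfolding outside_window_def by auto
  qed
  moreover have "offset (Suc j) \<le> 1/4"
    by (intro offset_le_quarter) simp
  ultimately show ?thesis
    using assms unfolding separated_def by auto
qed

lemma admissible_bounds: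
  assumes "admissible K s j v"
  shows "0 \<le> v \<and> v \<le> 1/2"
proof -
  consider "v = 0" | l where "j < l" "offset l \<le> v" "v \<le> offset l + 2 * s"
    using assms unfolding admissible_def by auto
  then show ?thesis
  proof cases
    case 2
    then have "offset l \<le> 1/4"
      by (intro offset_le_quarter) simp
    with 2 show ?thesis
      using offset_pos[of l] s_le by auto
  qed simp
qed

lemma admissible_Suc: "admissible K s (Suc j) v \<Longrightarrow> admissible K s j v"
  unfolding admissible_def using Suc_lessD by blast

lemma admissible_outside_window:
  assumes "Suc j \<le> K" "admissible K s (Suc j) v"
  shows "outside_window s (Suc j) v"
proof -
  have "v \<le> offset (Suc j) / 4 + 2 * s"
  proof -
    consider "v = 0" | l where "Suc j < l" "v \<le> offset l + 2 * s"
      using assms(2) unfolding admissible_def by auto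
    then show ?thesis
    proof cases
      case 2
      then show ?thesis
        using offset_less[of "Suc j" l] by simp
    qed (use offset_pos[of "Suc j"] s_pos in simp)
  qed
  then show ?thesis
    using s_le_offset[OF assms(1)] s_pos unfolding outside_window_def by linarith
qed

lemma admissible_tree_node_map:
  assumes "Suc j \<le> K" "x \<in> tree_nodes (hg_vertices M j) d" "admissible K s (Suc j) v"
  shows "admissible K s j (node_map s (Suc j) x v)"
proof (cases "x = leaf")
  case True
  then show ?thesis
    using admissible_Suc[OF assms(3)] by simp
next
  case False
  have x: "offset (Suc j) \<le> node_pos s (Suc j) x" "node_pos s (Suc j) x \<le> offset (Suc j) + s"
    "0 < node_scale s (Suc j) x" "node_scale s (Suc j) x \<le> s"
    using tree_node_bounds[OF assms(2) False] by auto
  have v: "0 \<le> v" "v \<le> 1/2"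
    using admissible_bounds[OF admissible_Suc[OF assms(3)]] by auto
  have "node_scale s (Suc j) x * v \<le> s * 1"
    using x v by (intro mult_mono) auto
  moreover have "0 \<le> node_scale s (Suc j) x * v"
    using x v by simp
  ultimately show ?thesis
    using x assms(1) unfolding admissible_def node_map_def by force
qed

lemma admissible_tree_node_pos:
  "Suc j \<le> K \<Longrightarrow> y \<in> tree_nodes (hg_vertices M j) d \<Longrightarrow> admissible K s j (node_pos s (Suc j) y)"
  using admissible_tree_node_map[of j y M d 0] by (simp add: admissible_def node_map_def)

lemma node_unmap_far:
  assumes "outside_window s (Suc j) b" "x \<in> tree_nodes (hg_vertices M j) d" "x \<noteq> leaf"
  shows "1 < \<bar>node_unmap s (Suc j) x b\<bar>"
proof -
  have x: "offset (Suc j) \<le> node_pos s (Suc j) x" "node_pos s (Suc j) x \<le> offset (Suc j) + s"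
    "0 < node_scale s (Suc j) x" "node_scale s (Suc j) x \<le> s"
    using tree_node_bounds[OF assms(2,3)] by auto
  then have "node_scale s (Suc j) x < \<bar>b - node_pos s (Suc j) x\<bar>"
    using assms(1) unfolding outside_window_def by linarith
  then show ?thesis
    using x(3) by (simp add: node_unmap_def less_divide_eq)
qed

lemma node_unmap_map_cons:
  assumes "u' \<in> hg_vertices M j" "x' \<in> tree_nodes (hg_vertices M j) d"
  shows "node_unmap s (Suc j) (node_cons u' x') (node_map s (Suc j) (node_cons u x) v) =
    node_unmap s (Suc j) x' (node_unmap s j u' (node_map s j u (node_map s (Suc j) x v)))"
  using node_unmap_cons[of s j u' x'] hg_vertex_bounds[OF assms(1)] tree_node_scale_pos[OF assms(2)] s_pos
  by (simp add: node_map_cons)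

lemma separated_same_branch:
  assumes "u \<in> hg_vertices M j" "x' \<in> tree_nodes (hg_vertices M j) d"
    and "separated K s (Suc j) (node_weight (Suc j) x) (node_weight (Suc j) x')
      (node_unmap s (Suc j) x' (node_map s (Suc j) x v))"
  shows "separated K s (Suc j) (node_weight (Suc j) (node_cons u x)) (node_weight (Suc j) (node_cons u x'))
    (node_unmap s (Suc j) (node_cons u x') (node_map s (Suc j) (node_cons u x) v))"
proof -
  have "node_scale s j u \<noteq> 0"
    using hg_vertex_bounds[OF assms(1)] by simp
  with assms(3) show ?thesis
    using node_unmap_map_cons[OF assms(1,2)] separated_weight_shift[of K s "Suc j" "Suc (node_weight j u)"]
    by simp
qed

lemma separated_leaf_node:
  assumes "Suc j \<le> K" "w \<in> tree_nodes (hg_vertices M j) d" "w \<noteq> leaf" "admissible K s (Suc j) v"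
  shows "separated K s (Suc j) (node_weight (Suc j) w) 0 (node_map s (Suc j) w v)"
proof -
  let ?o = "offset (Suc j)"
  have w: "?o \<le> node_pos s (Suc j) w" "0 < node_scale s (Suc j) w"
    using tree_node_bounds[OF assms(2,3)] by auto
  have "0 \<le> v"
    using admissible_bounds[OF admissible_Suc[OF assms(4)]] by simp
  with w have a: "?o \<le> node_map s (Suc j) w v"
    unfolding node_map_def by (smt (verit) mult_nonneg_nonneg)
  have "outside_window s l (node_map s (Suc j) w v)" if "Suc j < l" "l \<le> K" for l
  proof -
    have "offset l \<le> ?o / 4"
      using that by (intro offset_less) simp
    then show ?thesis
      using a s_le_offset[OF assms(1)] s_pos unfolding outside_window_def by linarith
  qed
  moreover have "2 * offset (Suc (Suc j)) < \<bar>node_map s (Suc j) w v\<bar>"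
    using a offset_pos[of "Suc j"] by (simp add: offset_Suc)
  moreover have "0 < node_weight (Suc j) w"
    using assms(2,3) by (cases d) (auto elim: tree_nodes_SucE)
  ultimately show ?thesis
    unfolding separated_def by simp
qed

lemma separated_distinct_branches:
  assumes "Suc j \<le> K" "well_separated K s j (hg_vertices M j)"
    and "u \<in> hg_vertices M j" "u' \<in> hg_vertices M j" "u \<noteq> u'"
    and "x \<in> tree_nodes (hg_vertices M j) d" "x' \<in> tree_nodes (hg_vertices M j) d"
    and "admissible K s (Suc j) v"
  shows "separated K s (Suc j) (node_weight (Suc j) (node_cons u x)) (node_weight (Suc j) (node_cons u' x'))
    (node_unmap s (Suc j) (node_cons u' x') (node_map s (Suc j) (node_cons u x) v))"
proof -
  let ?b = "node_unmap s j u' (node_map s j u (node_map s (Suc j) x v))"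
  have b: "separated K s j (node_weight j u) (node_weight j u') ?b"
    using well_separatedD[OF assms(2,3,4,5) admissible_tree_node_map[OF assms(1,6,8)]] .
  show ?thesis
  proof (cases "x' = leaf")
    case True
    then show ?thesis
      using separated_Suc[OF b, of "node_weight j u + node_weight (Suc j) x"]
        node_unmap_map_cons[OF assms(4,7)] by simp
  next
    case False
    have "outside_window s (Suc j) ?b"
      using b assms(1) unfolding separated_def by simp
    then show ?thesis
      using node_unmap_far[OF _ assms(7) False] node_unmap_map_cons[OF assms(4,7)] separated_if_far
      by simp
  qed
qed

lemma well_separated_tree_nodes:
  assumes "Suc j \<le> K" "well_separated K s j (hg_vertices M j)"
  shows "well_separated K s (Suc j) (tree_nodes (hg_vertices M j) d)"
proof (induction d)
  case 0
  then show ?case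
    by (simp add: well_separated_def)
next
  case (Suc d)
  let ?V = "hg_vertices M j"
  show ?case
    unfolding well_separated_def
  proof (intro ballI impI allI)
    fix w w' v
    assume w: "w \<in> tree_nodes ?V (Suc d)" and w': "w' \<in> tree_nodes ?V (Suc d)"
      and "w \<noteq> w'" and v: "admissible K s (Suc j) v"
    let ?a = "node_unmap s (Suc j) w' (node_map s (Suc j) w v)"
    show "separated K s (Suc j) (node_weight (Suc j) w) (node_weight (Suc j) w') ?a"
    proof (cases "w = leaf \<or> w' = leaf")
      case True
      then show ?thesis
        using \<open>w \<noteq> w'\<close> separated_leaf_node[OF assms(1) w _ v] separated_if_far
          node_unmap_far[OF admissible_outside_window[OF assms(1) v] w'] by auto
    next
      case False
      then obtain u x u' x' where ux: "u \<in> ?V" "x \<in> tree_nodes ?V d" "w = node_cons u x"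
        and ux': "u' \<in> ?V" "x' \<in> tree_nodes ?V d" "w' = node_cons u' x'"
        using w w' by (auto elim!: tree_nodes_SucE)
      show ?thesis
      proof (cases "u = u'")
        case True
        have "x \<noteq> x'"
          using \<open>w \<noteq> w'\<close> ux(3) ux'(3) True by simp
        with Suc.IH ux(2) ux'(2) v show ?thesis
          using separated_same_branch[OF ux(1) ux'(2)] ux(3) ux'(3) True by (simp add: well_separatedD)
      next
        case False
        then show ?thesis
          using separated_distinct_branches[OF assms ux(1) ux'(1) False ux(2) ux'(2) v] ux(3) ux'(3) by simp
      qed
    qed
  qed
qed

lemma well_separated_hg_vertices: "j \<le> K \<Longrightarrow> well_separated K s j (hg_vertices M j)"
proof (induction j)
  case 0
  then show ?case
    by (simp add: well_separated_def)
next
  case (Suc j)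
  then show ?case
    using well_separated_tree_nodes[of j M M] by simp
qed

lemma inj_on_node_pos: "j \<le> K \<Longrightarrow> inj_on (node_pos s j) (hg_vertices M j)"
proof (rule inj_onI, rule ccontr)
  fix x x'
  assume "j \<le> K" "x \<in> hg_vertices M j" "x' \<in> hg_vertices M j" "node_pos s j x = node_pos s j x'" "x \<noteq> x'"
  then have "separated K s j (node_weight j x) (node_weight j x') 0"
    using well_separated_hg_vertices[of j M] unfolding well_separated_def admissible_def
    by (force simp: node_map_def node_unmap_def)
  then show False
    using offset_pos[of "Suc j"] unfolding separated_def by simp
qed

end

section \<open>Cutting out the edges by intervals\<close>

definition selected :: "real \<Rightarrow> nat \<Rightarrow> (nat \<Rightarrow> real) \<Rightarrow> real \<Rightarrow> node \<Rightarrow> bool" where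
  "selected s j \<rho> \<theta> x \<longleftrightarrow> (node_pos s j x - \<theta>)\<^sup>2 \<le> (node_scale s j x)\<^sup>2 * \<rho> (node_weight j x)"

definition in_band :: "nat \<Rightarrow> nat \<Rightarrow> (nat \<Rightarrow> real) \<Rightarrow> bool" where
  "in_band l t \<rho> \<longleftrightarrow> (\<forall>n\<ge>t. 2 * (offset l)\<^sup>2 \<le> \<rho> n \<and> \<rho> n \<le> 4 * (offset l)\<^sup>2)"

text \<open>Quantifying over every \<open>\<rho>\<close> in the band lets the recursion below shift \<open>\<rho>\<close> by the
  weight of a common prefix; the lifting finally uses one particular \<open>\<rho>\<close>.\<close>

definition cuts_out :: "real \<Rightarrow> nat \<Rightarrow> node set \<Rightarrow> node set \<Rightarrow> real \<Rightarrow> nat \<Rightarrow> nat \<Rightarrow> bool" where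
  "cuts_out s j N e \<theta> t l \<longleftrightarrow>
     (\<forall>\<rho>. in_band l t \<rho> \<longrightarrow> (\<forall>x\<in>N. t \<le> node_weight j x \<and> selected s j \<rho> \<theta> x \<longleftrightarrow> x \<in> e))"

definition realized :: "real \<Rightarrow> nat \<Rightarrow> node set \<Rightarrow> node set \<Rightarrow> bool" where
  "realized s j N e \<longleftrightarrow> (\<exists>y\<in>N. \<exists>t l. 1 \<le> l \<and> cuts_out s j N e (node_pos s j y) t l)"

lemma selected_iff_unmap:
  "0 < node_scale s j x \<Longrightarrow> selected s j \<rho> \<theta> x \<longleftrightarrow> (node_unmap s j x \<theta>)\<^sup>2 \<le> \<rho> (node_weight j x)"
  by (simp add: selected_def node_unmap_def power_divide divide_le_eq power2_commute mult.commute)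

lemma in_band_shift: "in_band l (c + t) \<rho> \<Longrightarrow> in_band l t (\<lambda>n. \<rho> (c + n))"
  by (simp add: in_band_def)

lemma in_band_bounds:
  assumes "in_band l t \<rho>" "1 \<le> l" "t \<le> n"
  shows "0 \<le> \<rho> n \<and> \<rho> n \<le> 1/4"
proof -
  have "offset l \<le> 1/4"
    using assms(2) by (rule offset_le_quarter)
  then have "(offset l)\<^sup>2 \<le> (1/4)\<^sup>2"
    using offset_pos[of l] by (intro power_mono) auto
  moreover have "2 * (offset l)\<^sup>2 \<le> \<rho> n" "\<rho> n \<le> 4 * (offset l)\<^sup>2"
    using assms(1,3) unfolding in_band_def by auto
  ultimately show ?thesis
    by (simp add: power2_eq_square order_trans[OF zero_le_power2])
qed

lemma not_sq_le_if_abs_gt: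
  fixes a c r :: real
  assumes "c < \<bar>a\<bar>" "0 \<le> c" "r \<le> c\<^sup>2"
  shows "\<not> a\<^sup>2 \<le> r"
proof -
  have "c\<^sup>2 < \<bar>a\<bar>\<^sup>2"
    using assms(1,2) by (intro power_strict_mono) auto
  with assms(3) show ?thesis
    by simp
qed

context small_ratio
begin

lemma selected_cons_iff:
  assumes "u \<in> hg_vertices M j" "x \<in> tree_nodes (hg_vertices M j) d"
  shows "selected s (Suc j) \<rho> (node_pos s (Suc j) (node_cons w y)) (node_cons u x) \<longleftrightarrow>
    (node_unmap s (Suc j) x (node_unmap s j u (node_map s j w (node_pos s (Suc j) y))))\<^sup>2
      \<le> \<rho> (node_weight (Suc j) (node_cons u x))"
proof -
  have "0 < node_scale s (Suc j) (node_cons u x)"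
    using hg_vertex_bounds[OF assms(1)] tree_node_scale_pos[OF assms(2)] s_pos by simp
  with node_unmap_map_cons[OF assms, of w y 0] show ?thesis
    by (simp only: selected_iff_unmap node_map_0)
qed

lemma selected_cons_same:
  assumes "w \<in> hg_vertices M j" "x \<in> tree_nodes (hg_vertices M j) d"
  shows "selected s (Suc j) \<rho> (node_pos s (Suc j) (node_cons w y)) (node_cons w x) \<longleftrightarrow>
    selected s (Suc j) (\<lambda>n. \<rho> (Suc (node_weight j w) + n)) (node_pos s (Suc j) y) x"
proof -
  have "node_scale s j w \<noteq> 0"
    using hg_vertex_bounds[OF assms(1)] by simp
  with selected_cons_iff[OF assms, of \<rho> w y] show ?thesis
    by (simp only: node_unmap_map[OF \<open>node_scale s j w \<noteq> 0\<close>] node_values_cons(1) add_Suc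
        selected_iff_unmap[OF tree_node_scale_pos[OF assms(2)]])
qed

lemma selected_child:
  assumes "u \<in> hg_vertices M j"
  shows "selected s (Suc j) \<rho> (node_pos s (Suc j) (node_cons w leaf)) (node_cons u leaf) \<longleftrightarrow>
    selected s j (\<lambda>n. \<rho> (Suc n)) (node_pos s j w) u"
proof -
  have "0 < node_scale s j u"
    using hg_vertex_bounds[OF assms] by simp
  with selected_cons_iff[OF assms leaf_in_tree_nodes[of _ 0], of \<rho> w leaf] show ?thesis
    by (simp only: selected_iff_unmap node_unmap_leaf node_values_leaf node_values_cons(1) node_map_0 add_0_right)
qed

lemma off_branch_unmap_sq_not_le:
  assumes "Suc j \<le> K" "well_separated K s j (hg_vertices M j)"
    and "u \<in> hg_vertices M j" "w \<in> hg_vertices M j" "u \<noteq> w"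
    and "y \<in> tree_nodes (hg_vertices M j) d" "x \<in> tree_nodes (hg_vertices M j) d'"
    and "0 \<le> r" "r \<le> 1"
    and "x = leaf \<Longrightarrow> r \<le> 4 * (offset (Suc j))\<^sup>2 \<or> node_weight j w \<le> node_weight j u"
  shows "\<not> (node_unmap s (Suc j) x (node_unmap s j u (node_map s j w (node_pos s (Suc j) y))))\<^sup>2 \<le> r"
proof -
  let ?b = "node_unmap s j u (node_map s j w (node_pos s (Suc j) y))"
  have b: "separated K s j (node_weight j w) (node_weight j u) ?b"
    using well_separatedD[OF assms(2,4,3) assms(5)[symmetric] admissible_tree_node_pos[OF assms(1,6)]] .
  show ?thesis
  proof (cases "x = leaf")
    case True
    have "r \<le> (2 * offset (Suc j))\<^sup>2 \<or> node_weight j w \<le> node_weight j u"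
      using assms(10) True by (simp add: power_mult_distrib)
    then consider "r \<le> (2 * offset (Suc j))\<^sup>2" | "1 < \<bar>?b\<bar>"
      using b unfolding separated_def by linarith
    then show ?thesis
    proof cases
      case 1
      then show ?thesis
        using b True offset_pos[of "Suc j"] not_sq_le_if_abs_gt[of "2 * offset (Suc j)" ?b r]
        unfolding separated_def by simp
    next
      case 2
      then show ?thesis
        using True assms(9) not_sq_le_if_abs_gt[of 1 ?b r] by simp
    qed
  next
    case False
    have "outside_window s (Suc j) ?b"
      using b assms(1) unfolding separated_def by simp
    then show ?thesis
      using node_unmap_far[OF _ assms(7) False] assms(9) not_sq_le_if_abs_gt[of 1 _ r] by simp
  qed
qed

lemma off_branch_not_selected:
  assumes "Suc j \<le> K" "well_separated K s j (hg_vertices M j)"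
    and "u \<in> hg_vertices M j" "w \<in> hg_vertices M j" "u \<noteq> w"
    and "y \<in> tree_nodes (hg_vertices M j) d" "x \<in> tree_nodes (hg_vertices M j) d'"
    and "in_band l t \<rho>" "1 \<le> l" "t \<le> node_weight (Suc j) (node_cons u x)"
    and "x = leaf \<Longrightarrow> l = Suc j \<or> node_weight j w \<le> node_weight j u"
  shows "\<not> selected s (Suc j) \<rho> (node_pos s (Suc j) (node_cons w y)) (node_cons u x)"
proof -
  let ?r = "\<rho> (node_weight (Suc j) (node_cons u x))"
  have r: "0 \<le> ?r" "?r \<le> 1"
    using in_band_bounds[OF assms(8-10)] by auto
  have "x = leaf \<Longrightarrow> ?r \<le> 4 * (offset (Suc j))\<^sup>2 \<or> node_weight j w \<le> node_weight j u"
    using assms(8,10,11) unfolding in_band_def by auto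
  then show ?thesis
    using off_branch_unmap_sq_not_le[OF assms(1-7) r] selected_cons_iff[OF assms(3,7)] by simp
qed

lemma tree_node_not_selected_at_0:
  assumes "Suc j \<le> K" "x \<in> tree_nodes (hg_vertices M j) d" "x \<noteq> leaf" "\<rho> (node_weight (Suc j) x) \<le> 1"
  shows "\<not> selected s (Suc j) \<rho> 0 x"
proof -
  have "outside_window s (Suc j) 0"
    using admissible_outside_window[OF assms(1)] by (simp add: admissible_def)
  then have "1 < \<bar>node_unmap s (Suc j) x 0\<bar>"
    by (rule node_unmap_far[OF _ assms(2,3)])
  then show ?thesis
    using selected_iff_unmap[OF tree_node_scale_pos[OF assms(2)]] not_sq_le_if_abs_gt[of 1] assms(4) by simp
qed

lemma leaf_selected_by_tree_node:
  assumes "Suc j \<le> K" "y \<in> tree_nodes (hg_vertices M j) d" "y \<noteq> leaf" "in_band (Suc j) 0 \<rho>"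
  shows "selected s (Suc j) \<rho> (node_pos s (Suc j) y) leaf"
proof -
  let ?o = "offset (Suc j)"
  have y: "?o \<le> node_pos s (Suc j) y" "node_pos s (Suc j) y \<le> ?o + s"
    using tree_node_bounds[OF assms(2,3)] by auto
  have "?o + s \<le> (101/100) * ?o"
    using s_le_offset[OF assms(1)] by simp
  then have "(node_pos s (Suc j) y)\<^sup>2 \<le> ((101/100) * ?o)\<^sup>2"
    using y offset_pos[of "Suc j"] by (intro power_mono) auto
  also have "\<dots> = (101/100)\<^sup>2 * ?o\<^sup>2"
    by (rule power_mult_distrib)
  also have "\<dots> \<le> 2 * ?o\<^sup>2"
    by (intro mult_right_mono) (simp_all add: power2_eq_square)
  also have "\<dots> \<le> \<rho> 0"
    using assms(4) unfolding in_band_def by simp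
  finally show ?thesis
    by (simp add: selected_def)
qed

lemma branch_cons_cut_out:
  assumes "Suc j \<le> K" "well_separated K s j (hg_vertices M j)"
    and "u \<in> hg_vertices M j" "y \<in> tree_nodes (hg_vertices M j) d"
    and "cuts_out s (Suc j) (tree_nodes (hg_vertices M j) d) p (node_pos s (Suc j) y) 0 (Suc j)"
  shows "cuts_out s (Suc j) (tree_nodes (hg_vertices M j) (Suc d)) (insert leaf (node_cons u ` p))
    (node_pos s (Suc j) (node_cons u y)) 0 (Suc j)"
  unfolding cuts_out_def
proof (intro allI impI ballI)
  let ?V = "hg_vertices M j"
  let ?\<theta> = "node_pos s (Suc j) (node_cons u y)"
  fix \<rho> x
  assume \<rho>: "in_band (Suc j) 0 \<rho>" and x: "x \<in> tree_nodes ?V (Suc d)"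
  show "0 \<le> node_weight (Suc j) x \<and> selected s (Suc j) \<rho> ?\<theta> x \<longleftrightarrow> x \<in> insert leaf (node_cons u ` p)"
  proof (cases "x = leaf")
    case True
    have "node_cons u y \<in> tree_nodes ?V (Suc d)"
      using assms(3,4) by auto
    from leaf_selected_by_tree_node[OF assms(1) this node_cons_neq_leaf(1) \<rho>] True show ?thesis
      by simp
  next
    case False
    then obtain u' x' where x': "u' \<in> ?V" "x' \<in> tree_nodes ?V d" "x = node_cons u' x'"
      using x by (auto elim: tree_nodes_SucE)
    show ?thesis
    proof (cases "u' = u")
      case True
      have "in_band (Suc j) 0 (\<lambda>n. \<rho> (Suc (node_weight j u) + n))"
        using \<rho> by (simp add: in_band_def)
      then show ?thesis
        using assms(5) x' True selected_cons_same[OF assms(3) x'(2)] unfolding cuts_out_def by auto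
    next
      case False
      have "\<not> selected s (Suc j) \<rho> ?\<theta> x"
        using off_branch_not_selected[OF assms(1,2) x'(1) assms(3) False assms(4) x'(2) \<rho>] x'(3) by simp
      moreover have "x \<notin> insert leaf (node_cons u ` p)"
        using x'(3) False by auto
      ultimately show ?thesis
        by simp
    qed
  qed
qed

lemma branch_cut_out:
  assumes "Suc j \<le> K" "well_separated K s j (hg_vertices M j)"
  shows "p \<in> branches (hg_vertices M j) d \<Longrightarrow> \<exists>y\<in>tree_nodes (hg_vertices M j) d.
    cuts_out s (Suc j) (tree_nodes (hg_vertices M j) d) p (node_pos s (Suc j) y) 0 (Suc j)"
proof (induction d arbitrary: p)
  case 0
  have "cuts_out s (Suc j) {leaf} {leaf} 0 0 (Suc j)"
    using in_band_bounds[of "Suc j" 0 _ 0] by (auto simp: cuts_out_def selected_def)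
  with 0 show ?case
    by auto
next
  case (Suc d)
  let ?V = "hg_vertices M j"
  obtain u p' where p: "u \<in> ?V" "p' \<in> branches ?V d" "p = insert leaf (node_cons u ` p')"
    using Suc.prems by auto
  obtain y where "y \<in> tree_nodes ?V d"
    and "cuts_out s (Suc j) (tree_nodes ?V d) p' (node_pos s (Suc j) y) 0 (Suc j)"
    using Suc.IH[OF p(2)] by blast
  with p show ?case
    using branch_cons_cut_out[OF assms p(1)] by (intro bexI[of _ "node_cons u y"]) auto
qed

lemma sibling_copy_cut_out:
  assumes "Suc j \<le> K" "well_separated K s j (hg_vertices M j)"
    and "y \<in> hg_vertices M j" "1 \<le> l" "cuts_out s j (hg_vertices M j) e (node_pos s j y) t l"
  shows "cuts_out s (Suc j) (tree_nodes (hg_vertices M j) d) ((\<lambda>u. node_cons u leaf) ` e)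
    (node_pos s (Suc j) (node_cons y leaf)) (Suc t) l"
  unfolding cuts_out_def
proof (intro allI impI ballI)
  let ?V = "hg_vertices M j"
  let ?\<theta> = "node_pos s (Suc j) (node_cons y leaf)"
  fix \<rho> x
  assume \<rho>: "in_band l (Suc t) \<rho>" and x: "x \<in> tree_nodes ?V d"
  show "Suc t \<le> node_weight (Suc j) x \<and> selected s (Suc j) \<rho> ?\<theta> x \<longleftrightarrow> x \<in> (\<lambda>u. node_cons u leaf) ` e"
  proof (cases "x = leaf")
    case False
    then obtain u x0 d' where x0: "u \<in> ?V" "x0 \<in> tree_nodes ?V d'" "x = node_cons u x0"
      using x by (cases d) (auto elim: tree_nodes_SucE)
    show ?thesis
    proof (cases "x0 = leaf")
      case True
      have "in_band l t (\<lambda>n. \<rho> (Suc n))"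
        using in_band_shift[of l 1 t \<rho>] \<rho> by simp
      then show ?thesis
        using assms(5) x0 True selected_child[OF x0(1)] unfolding cuts_out_def by auto
    next
      case False
      have "\<not> selected s (Suc j) \<rho> ?\<theta> x" if "Suc t \<le> node_weight (Suc j) x"
      proof (cases "u = y")
        case True
        have "\<rho> (node_weight (Suc j) x) \<le> 1"
          using in_band_bounds[OF \<rho> assms(4) that] by simp
        with True show ?thesis
          using tree_node_not_selected_at_0[OF assms(1) x0(2) False, of "\<lambda>n. \<rho> (Suc (node_weight j y) + n)"]
            selected_cons_same[OF x0(1,2), of \<rho> leaf] x0(3) by simp
      next
        case False
        then show ?thesis
          using off_branch_not_selected[OF assms(1,2) x0(1) assms(3) False leaf_in_tree_nodes[of _ 0] x0(2) \<rho>
              assms(4)] that x0(3) \<open>x0 \<noteq> leaf\<close> by simp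
      qed
      moreover have "x \<notin> (\<lambda>u. node_cons u leaf) ` e"
        using x0(3) False by auto
      ultimately show ?thesis
        by blast
    qed
  qed auto
qed

lemma cons_copy_cut_out:
  assumes "Suc j \<le> K" "well_separated K s j (hg_vertices M j)"
    and "w \<in> hg_vertices M j" "y \<in> tree_nodes (hg_vertices M j) d" "1 \<le> l"
    and "cuts_out s (Suc j) (tree_nodes (hg_vertices M j) d) e (node_pos s (Suc j) y) t l"
  shows "cuts_out s (Suc j) (tree_nodes (hg_vertices M j) (Suc d)) (node_cons w ` e)
    (node_pos s (Suc j) (node_cons w y)) (Suc (node_weight j w) + t) l"
  unfolding cuts_out_def
proof (intro allI impI ballI)
  let ?V = "hg_vertices M j"
  let ?\<theta> = "node_pos s (Suc j) (node_cons w y)"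
  let ?t = "Suc (node_weight j w) + t"
  fix \<rho> x
  assume \<rho>: "in_band l ?t \<rho>" and x: "x \<in> tree_nodes ?V (Suc d)"
  show "?t \<le> node_weight (Suc j) x \<and> selected s (Suc j) \<rho> ?\<theta> x \<longleftrightarrow> x \<in> node_cons w ` e"
  proof (cases "x = leaf")
    case False
    then obtain u x0 where x0: "u \<in> ?V" "x0 \<in> tree_nodes ?V d" "x = node_cons u x0"
      using x by (auto elim: tree_nodes_SucE)
    show ?thesis
    proof (cases "u = w")
      case True
      then show ?thesis
        using assms(6) in_band_shift[OF \<rho>] x0 selected_cons_same[OF assms(3) x0(2)]
        unfolding cuts_out_def by auto
    next
      case False
      have "\<not> selected s (Suc j) \<rho> ?\<theta> x" if "?t \<le> node_weight (Suc j) x"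
      proof -
        have "x0 = leaf \<Longrightarrow> node_weight j w \<le> node_weight j u"
          using that x0(3) by simp
        then show ?thesis
          using off_branch_not_selected[OF assms(1,2) x0(1) assms(3) False assms(4) x0(2) \<rho> assms(5)] that x0(3)
          by simp
      qed
      moreover have "x \<notin> node_cons w ` e"
        using x0(3) False by auto
      ultimately show ?thesis
        by blast
    qed
  qed auto
qed

lemma sibling_copies_realized:
  assumes "Suc j \<le> K" "well_separated K s j (hg_vertices M j)"
    and "\<And>e. e \<in> E \<Longrightarrow> realized s j (hg_vertices M j) e"
  shows "e \<in> sibling_copies (hg_vertices M j) E d \<Longrightarrow> realized s (Suc j) (tree_nodes (hg_vertices M j) d) e"
proof (induction d arbitrary: e)
  case (Suc d)
  let ?V = "hg_vertices M j"
  consider e' where "e' \<in> E" "e = (\<lambda>u. node_cons u leaf) ` e'"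
    | w e0 where "w \<in> ?V" "e0 \<in> sibling_copies ?V E d" "e = node_cons w ` e0"
    using Suc.prems by auto
  then show ?case
  proof cases
    case 1
    then obtain y t l where "y \<in> ?V" "1 \<le> l" "cuts_out s j ?V e' (node_pos s j y) t l"
      using assms(3) unfolding realized_def by blast
    moreover have "node_cons y leaf \<in> tree_nodes ?V (Suc d)"
      using \<open>y \<in> ?V\<close> by auto
    ultimately show ?thesis
      using sibling_copy_cut_out[OF assms(1,2)] 1(2) unfolding realized_def by blast
  next
    case 2
    then obtain y t l where "y \<in> tree_nodes ?V d" "1 \<le> l"
        "cuts_out s (Suc j) (tree_nodes ?V d) e0 (node_pos s (Suc j) y) t l"
      using Suc.IH unfolding realized_def by blast
    moreover have "node_cons w y \<in> tree_nodes ?V (Suc d)"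
      using 2(1) \<open>y \<in> tree_nodes ?V d\<close> by auto
    ultimately show ?thesis
      using cons_copy_cut_out[OF assms(1,2) 2(1)] 2(3) unfolding realized_def by blast
  qed
qed simp

lemma hg_edges_realized: "j \<le> K \<Longrightarrow> e \<in> hg_edges M j \<Longrightarrow> realized s j (hg_vertices M j) e"
proof (induction j arbitrary: e)
  case (Suc j)
  let ?V = "hg_vertices M j"
  have sep: "well_separated K s j ?V"
    using well_separated_hg_vertices Suc.prems(1) by simp
  have "e \<in> branches ?V M \<or> e \<in> sibling_copies ?V (hg_edges M j) M"
    using Suc.prems(2) by simp
  then show ?case
  proof
    assume "e \<in> branches ?V M"
    then show ?thesis
      using branch_cut_out[OF Suc.prems(1) sep] unfolding realized_def by fastforce
  next
    assume e: "e \<in> sibling_copies ?V (hg_edges M j) M"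
    have "realized s j ?V e'" if "e' \<in> hg_edges M j" for e'
      using Suc.IH Suc.prems(1) that by simp
    from sibling_copies_realized[OF Suc.prems(1) sep this e] show ?thesis
      by simp
  qed
qed simp

end

section \<open>Lifting to half-spaces\<close>

definition vec4 :: "real \<Rightarrow> real \<Rightarrow> real \<Rightarrow> real \<Rightarrow> real^5" where
  "vec4 a b c d = a *\<^sub>R axis 1 1 + b *\<^sub>R axis 2 1 + c *\<^sub>R axis 3 1 + d *\<^sub>R axis 4 1"

lemma inner_vec4: "inner (vec4 a b c d) (vec4 a' b' c' d') = a * a' + b * b' + c * c' + d * d'"
proof -
  have "(1::5) \<noteq> 2" "(1::5) \<noteq> 3" "(1::5) \<noteq> 4" "(2::5) \<noteq> 3" "(2::5) \<noteq> 4" "(3::5) \<noteq> 4"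
    by simp_all
  then show ?thesis
    unfolding vec4_def by (simp add: inner_add_left inner_add_right inner_axis_axis)
qed

definition lift :: "real \<Rightarrow> real \<Rightarrow> nat \<Rightarrow> real^5" where
  "lift p w n = vec4 p (p\<^sup>2) (w\<^sup>2) (w\<^sup>2 / 4 ^ n)"

lemma lift_eqD:
  assumes "lift p w n = lift p' w' n'"
  shows "p = p'"
proof -
  have "inner (lift p w n) (vec4 1 0 0 0) = inner (lift p' w' n') (vec4 1 0 0 0)"
    using assms by simp
  then show ?thesis
    by (simp add: lift_def inner_vec4)
qed

lemma halfspace_lift:
  "\<exists>H. halfspace H \<and> (\<forall>p w n. lift p w n \<in> H \<longleftrightarrow> (p - \<theta>)\<^sup>2 \<le> w\<^sup>2 * (A - A / 2 * 4 ^ t / 4 ^ n))"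
proof -
  define a where "a = vec4 (- 2 * \<theta>) 1 (- A) (A / 2 * 4 ^ t)"
  have "inner a (vec4 0 1 0 0) = 1"
    by (simp add: a_def inner_vec4)
  then have "a \<noteq> 0"
    by auto
  then have "halfspace {z. inner a z \<le> - \<theta>\<^sup>2}"
    unfolding halfspace_def by blast
  moreover have "lift p w n \<in> {z. inner a z \<le> - \<theta>\<^sup>2} \<longleftrightarrow> (p - \<theta>)\<^sup>2 \<le> w\<^sup>2 * (A - A / 2 * 4 ^ t / 4 ^ n)"
    for p w n
    by (simp add: a_def lift_def inner_vec4 power2_eq_square algebra_simps)
  ultimately show ?thesis
    by blast
qed

lemma band_profile:
  fixes A :: real
  assumes "0 < A"
  shows "t \<le> n \<Longrightarrow> A / 2 \<le> A - A / 2 * 4 ^ t / 4 ^ n \<and> A - A / 2 * 4 ^ t / 4 ^ n \<le> A"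
    and "n < t \<Longrightarrow> A - A / 2 * 4 ^ t / 4 ^ n < 0"
proof -
  let ?q = "(4::real) ^ t / 4 ^ n"
  have q: "A / 2 * 4 ^ t / 4 ^ n = A / 2 * ?q"
    by (rule times_divide_eq_right[symmetric])
  {
    assume "t \<le> n"
    then have "(4::real) ^ t \<le> 4 ^ n"
      by (rule power_increasing) simp
    then have "0 \<le> ?q" "?q \<le> 1"
      by simp_all
    then have "0 \<le> A / 2 * ?q" "A / 2 * ?q \<le> A / 2"
      using assms mult_left_mono[of ?q 1 "A / 2"] by simp_all
    then show "A / 2 \<le> A - A / 2 * 4 ^ t / 4 ^ n \<and> A - A / 2 * 4 ^ t / 4 ^ n \<le> A"
      unfolding q by linarith
  next
    assume "n < t"
    then have "(4::real) ^ Suc n \<le> 4 ^ t"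
      by (intro power_increasing) simp_all
    then have "4 \<le> ?q"
      by (simp add: le_divide_eq)
    then have "A / 2 * 4 \<le> A / 2 * ?q"
      using assms by (intro mult_left_mono) simp_all
    then show "A - A / 2 * 4 ^ t / 4 ^ n < 0"
      unfolding q using assms by linarith
  }
qed

context small_ratio
begin

definition embed :: "node \<Rightarrow> real^5" where
  "embed x = lift (node_pos s K x) (node_scale s K x) (node_weight K x)"

lemma inj_on_embed: "inj_on embed (hg_vertices M K)"
  using inj_on_node_pos[of K M] lift_eqD unfolding embed_def inj_on_def by blast

lemma hg_edge_cut_by_halfspace:
  assumes "e \<in> hg_edges M K"
  shows "\<exists>H. halfspace H \<and> H \<inter> embed ` hg_vertices M K = embed ` e"
proof -
  let ?V = "hg_vertices M K"
  obtain y t l where "y \<in> ?V" "1 \<le> l" and cut: "cuts_out s K ?V e (node_pos s K y) t l"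
    using hg_edges_realized[OF order_refl assms] unfolding realized_def by blast
  define A where "A = 4 * (offset l)\<^sup>2"
  define \<rho> where "\<rho> n = A - A / 2 * 4 ^ t / 4 ^ n" for n
  have A: "0 < A"
    using offset_pos[of l] by (simp add: A_def)
  have "in_band l t \<rho>"
    using band_profile(1)[OF A] unfolding in_band_def \<rho>_def A_def by simp
  with cut have selected: "t \<le> node_weight K x \<and> selected s K \<rho> (node_pos s K y) x \<longleftrightarrow> x \<in> e"
    if "x \<in> ?V" for x
    using that unfolding cuts_out_def by blast
  obtain H where H: "halfspace H"
    and lift_in_H: "\<And>p w n. lift p w n \<in> H \<longleftrightarrow> (p - node_pos s K y)\<^sup>2 \<le> w\<^sup>2 * \<rho> n"
    using halfspace_lift[of "node_pos s K y" A t] unfolding \<rho>_def by blast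
  have "embed x \<in> H \<longleftrightarrow> x \<in> e" if "x \<in> ?V" for x
  proof -
    let ?p = "node_pos s K x" and ?w = "node_scale s K x" and ?n = "node_weight K x"
    have "embed x \<in> H \<longleftrightarrow> (?p - node_pos s K y)\<^sup>2 \<le> ?w\<^sup>2 * \<rho> ?n"
      by (simp only: embed_def lift_in_H)
    also have "\<dots> \<longleftrightarrow> t \<le> ?n \<and> selected s K \<rho> (node_pos s K y) x"
    proof (cases "t \<le> ?n")
      case False
      then have "?w\<^sup>2 * \<rho> ?n < 0"
        using band_profile(2)[OF A] hg_vertex_bounds[OF that] by (simp add: \<rho>_def mult_pos_neg)
      then show ?thesis
        using False zero_le_power2[of "?p - node_pos s K y"] by linarith
    qed (simp add: selected_def)
    finally show ?thesis
      using selected[OF that] by simp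
  qed
  then have "H \<inter> embed ` ?V = embed ` e"
    using hg_edges_subset[OF assms] by auto
  with H show ?thesis
    by blast
qed

end

theorem mainTheorem9:
  fixes k m :: nat
  assumes "k > 0" and "m > 0"
  shows "\<exists>P :: (real^5) set. finite P \<and>
           (\<forall>c :: real^5 \<Rightarrow> nat. (\<forall>x\<in>P. c x < k) \<longrightarrow>
              (\<exists>H. halfspace H \<and> card (H \<inter> P) \<ge> m \<and>
                   (\<exists>i. \<forall>x\<in>H \<inter> P. c x = i)))"
proof -
  interpret small_ratio k "offset k / 100"
    by unfold_locales (simp_all add: offset_pos)
  let ?V = "hg_vertices (m - 1) k"
  show ?thesis
  proof (rule exI[of _ "embed ` ?V"], intro conjI allI impI)
    show "finite (embed ` ?V)"
      using finite_hg_vertices by simp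
    fix c :: "real^5 \<Rightarrow> nat"
    assume "\<forall>x\<in>embed ` ?V. c x < k"
    then obtain e i where e: "e \<in> hg_edges (m - 1) k" "\<forall>x\<in>e. c (embed x) = i"
      using hg_edges_monochromatic[of "{..<k}" k "c \<circ> embed" "m - 1"] by auto
    obtain H where H: "halfspace H" "H \<inter> embed ` ?V = embed ` e"
      using hg_edge_cut_by_halfspace[OF e(1)] by blast
    have "card (embed ` e) = m"
      using card_image[OF inj_on_subset[OF inj_on_embed hg_edges_subset[OF e(1)]]] card_hg_edges[OF e(1)]
        assms(2) by simp
    with H e(2) show "\<exists>H. halfspace H \<and> m \<le> card (H \<inter> embed ` ?V) \<and> (\<exists>i. \<forall>x\<in>H \<inter> embed ` ?V. c x = i)"
      by auto
  qed
qed

end
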